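(* Let $f:\mathbb{R}\to\mathbb{R}$ be a concave function such that $f(0)=0$, $f$ is differentiable at $0$, $f'(0)\neq 0$, $\sup_x f(x)=M>0$, and $\operatorname{argsup}_x f(x)>0$. Let $\mathbb{P}$ and $\mathbb{Q}$ be probability distributions with support $\mathcal{X}$, and let $\mathbb{M}=\frac12\mathbb{P}+\frac12\mathbb{Q}$. Define $$\mathrm{D}^{Rp}_f(\mathbb{P},\mathbb{Q})=\sup_{C:\mathcal{X}\to\mathbb{R}} 2\,\mathbb{E}_{x\sim\mathbb{P},\,y\sim\mathbb{Q}}\big[f(C(x)-C(y))\big],$$ $$\mathrm{D}^{Ra}_f(\mathbb{P},\mathbb{Q})=\sup_{C:\mathcal{X}\to\mathbb{R}} \mathbb{E}_{x\sim\mathbb{P}}\Big[f\big(C(x)-\mathbb{E}_{y\sim\mathbb{Q}}C(y)\big)\Big]+\mathbb{E}_{y\sim\mathbb{Q}}\Big[f\big(\mathbb{E}_{x\sim\mathbb{P}}C(x)-C(y)\big)\Big],$$ $$\mathrm{D}^{Ralf}_f(\mathbb{P},\mathbb{Q})=\sup_{C:\mathcal{X}\to\mathbb{R}} 2\,\mathbb{E}_{x\sim\mathbb{P}}\Big[f\big(C(x)-\mathbb{E}_{y\sim\mathbb{Q}}C(y)\big)\Big],$$ $$\mathrm{D}^{Rc}_f(\mathbb{P},\mathbb{Q})=\sup_{C:\mathcal{X}\to\mathbb{R}} \mathbb{E}_{x\sim\mathbb{P}}\Big[f\big(C(x)-\mathbb{E}_{m\sim\mathbb{M}}C(m)\big)\Big]+\mathbb{E}_{y\sim\mathbb{Q}}\Big[f\big(\mathbb{E}_{m\sim\mathbb{M}}C(m)-C(y)\big)\Big].$$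 Then $\mathrm{D}^{Rp}_f$, $\mathrm{D}^{Ra}_f$, $\mathrm{D}^{Ralf}_f$ and $\mathrm{D}^{Rc}_f$ are divergences.
   Context: The suprema range over (measurable) critic functions $C:\mathcal{X}\to\mathbb{R}$ for which the expectations are defined. A function $D$ assigning a real number to each pair of probability distributions on a common support is a divergence if for all $\mathbb{P},\mathbb{Q}$: $D(\mathbb{P},\mathbb{Q})\ge 0$, and $D(\mathbb{P},\mathbb{Q})=0$ if and only if $\mathbb{P}=\mathbb{Q}$. The condition $\operatorname{argsup}_x f(x)>0$ means the supremum of $f$ is reached at some positive $x$ (or approached as $x\to+\infty$). *)

theory Defs
  imports "HOL-Probability.Probability"
begin

text \<open>Critic functions C range over measurable functions
  for which all the expectations occurring in the objective exist (are integrable).\<close>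

definition DRp :: "(real \<Rightarrow> real) \<Rightarrow> 'a measure \<Rightarrow> 'a measure \<Rightarrow> real" where
  "DRp f P Q =
    (SUP C \<in> {C. C \<in> borel_measurable P \<and>
                 integrable (P \<Otimes>\<^sub>M Q) (\<lambda>(x, y). f (C x - C y))}.
       2 * (\<integral>(x, y). f (C x - C y) \<partial>(P \<Otimes>\<^sub>M Q)))"

definition DRa :: "(real \<Rightarrow> real) \<Rightarrow> 'a measure \<Rightarrow> 'a measure \<Rightarrow> real" where
  "DRa f P Q =
    (SUP C \<in> {C. C \<in> borel_measurable P \<and> integrable P C \<and> integrable Q C \<and>
                 integrable P (\<lambda>x. f (C x - (\<integral>y. C y \<partial>Q))) \<and>
                 integrable Q (\<lambda>y. f ((\<integral>x. C x \<partial>P) - C y))}.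
       (\<integral>x. f (C x - (\<integral>y. C y \<partial>Q)) \<partial>P) + (\<integral>y. f ((\<integral>x. C x \<partial>P) - C y) \<partial>Q))"

definition DRalf :: "(real \<Rightarrow> real) \<Rightarrow> 'a measure \<Rightarrow> 'a measure \<Rightarrow> real" where
  "DRalf f P Q =
    (SUP C \<in> {C. C \<in> borel_measurable P \<and> integrable Q C \<and>
                 integrable P (\<lambda>x. f (C x - (\<integral>y. C y \<partial>Q)))}.
       2 * (\<integral>x. f (C x - (\<integral>y. C y \<partial>Q)) \<partial>P))"

definition mix_mean :: "'a measure \<Rightarrow> 'a measure \<Rightarrow> ('a \<Rightarrow> real) \<Rightarrow> real" where
  "mix_mean P Q C = (1/2) * (\<integral>x. C x \<partial>P) + (1/2) * (\<integral>y. C y \<partial>Q)"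

definition DRc :: "(real \<Rightarrow> real) \<Rightarrow> 'a measure \<Rightarrow> 'a measure \<Rightarrow> real" where
  "DRc f P Q =
    (SUP C \<in> {C. C \<in> borel_measurable P \<and> integrable P C \<and> integrable Q C \<and>
                 integrable P (\<lambda>x. f (C x - mix_mean P Q C)) \<and>
                 integrable Q (\<lambda>y. f (mix_mean P Q C - C y))}.
       (\<integral>x. f (C x - mix_mean P Q C) \<partial>P) + (\<integral>y. f (mix_mean P Q C - C y) \<partial>Q))"

definition is_divergence_on :: "'a measure \<Rightarrow> ('a measure \<Rightarrow> 'a measure \<Rightarrow> real) \<Rightarrow> bool" where
  "is_divergence_on X D \<longleftrightarrow>
     (\<forall>P Q. prob_space P \<longrightarrow> prob_space Q \<longrightarrow> sets P = sets X \<longrightarrow> sets Q = sets X \<longrightarrow>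
        D P Q \<ge> 0 \<and> (D P Q = 0 \<longleftrightarrow> P = Q))"

end

theory Submission
  imports Defs
begin

text \<open>
  The critic C = 0 has objective 0 and f is bounded above, so each divergence is a finite
  supremum that is at least 0. If P = Q, every objective is at most 0: for DRp because concavity
  and f 0 = 0 give f u + f (- u) \<le> 0, which integrates to 0 against the swap-invariant P \<times> P;
  for the others by Jensen's inequality, since the argument of f has mean 0. If P \<noteq> Q, choose an
  event A with P(A) \<noteq> Q(A) and the critic t * indicator A. Its objective is a finite combination
  of values f (k * t), with derivative at t = 0 a nonzero multiple of f'(0) (P(A) - Q(A)), so it is
  positive for some t.
\<close>

lemma DERIV_nonzero_imp_ex_pos:
  fixes g :: "real \<Rightarrow> real"
  assumes "(g has_real_derivative d) (at 0)" "d \<noteq> 0" "g 0 = 0"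
  obtains t where "g t > 0"
proof (cases "d > 0")
  case True
  with DERIV_pos_inc_right[OF assms(1)]
  obtain e where "e > 0" "\<And>h. 0 < h \<Longrightarrow> h < e \<Longrightarrow> g 0 < g h"
    by auto
  then show ?thesis using that[of "e/2"] assms(3) by simp
next
  case False
  with assms(2) have "d < 0" by linarith
  with DERIV_neg_dec_left[OF assms(1)]
  obtain e where "e > 0" "\<And>h. 0 < h \<Longrightarrow> h < e \<Longrightarrow> g 0 < g (- h)"
    by auto
  then show ?thesis using that[of "- e/2"] assms(3) by simp
qed

lemma concave_on_add_minus_nonpos:
  fixes f :: "real \<Rightarrow> real"
  assumes "concave_on UNIV f" "f 0 = 0"
  shows "f z + f (- z) \<le> 0"
  using concave_onD[OF assms(1), of "1/2" z "- z"] assms(2) by simp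

lemma SUP_nonneg_and_eq_0_iff:
  fixes V :: "'c \<Rightarrow> real"
  assumes bound: "\<And>C. C \<in> S \<Longrightarrow> V C \<le> B" and zero: "C\<^sub>0 \<in> S" "V C\<^sub>0 = 0"
    and nonpos: "\<And>C. E \<Longrightarrow> C \<in> S \<Longrightarrow> V C \<le> 0"
    and pos: "\<not> E \<Longrightarrow> \<exists>C\<in>S. V C > 0"
  shows "(SUP C\<in>S. V C) \<ge> 0 \<and> ((SUP C\<in>S. V C) = 0 \<longleftrightarrow> E)"
proof -
  have bdd: "bdd_above (V ` S)"
    using bound by (rule bdd_aboveI2)
  have "(SUP C\<in>S. V C) \<ge> 0"
    using cSUP_upper[OF zero(1) bdd] zero(2) by simp
  moreover have "(SUP C\<in>S. V C) \<le> 0" if E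
    using zero(1) nonpos[OF that] by (auto intro!: cSUP_least)
  moreover have "(SUP C\<in>S. V C) > 0" if "\<not> E"
    using pos[OF that] cSUP_upper[OF _ bdd] by (auto intro: less_le_trans)
  ultimately show ?thesis by force
qed

lemma (in prob_space) concave_jensens_inequality:
  fixes g :: "real \<Rightarrow> real"
  assumes "integrable M X" "integrable M (\<lambda>x. g (X x))" "concave_on UNIV g"
  shows "expectation (\<lambda>x. g (X x)) \<le> g (expectation X)"
proof -
  have "- g (expectation X) \<le> expectation (\<lambda>x. - g (X x))"
    using assms by (intro jensens_inequality[where I = UNIV]) (auto simp: concave_on_def)
  then show ?thesis by simp
qed

lemma (in prob_space) integral_comp_indicator:
  fixes F :: "real \<Rightarrow> real"
  assumes "A \<in> events"
  shows "integrable M (\<lambda>x. F (indicator A x))"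
    and "expectation (\<lambda>x. F (indicator A x)) = prob A * F 1 + (1 - prob A) * F 0"
proof -
  have F_ind: "F (indicator A x) = F 0 + (F 1 - F 0) * indicator A x" for x
    by (simp add: indicator_def)
  have ind: "integrable M (indicator A :: 'a \<Rightarrow> real)"
    using assms by (intro integrable_real_indicator) (simp_all add: emeasure_eq_measure)
  then show "integrable M (\<lambda>x. F (indicator A x))"
    unfolding F_ind by simp
  have "expectation (\<lambda>x. F 0 + (F 1 - F 0) * indicator A x) = F 0 + (F 1 - F 0) * prob A"
    using ind assms by (subst Bochner_Integration.integral_add) (simp_all add: Int_absorb1 prob_space)
  then show "expectation (\<lambda>x. F (indicator A x)) = prob A * F 1 + (1 - prob A) * F 0"
    unfolding F_ind by (simp add: algebra_simps)
qed

lemma integral_pair_comp_indicator: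
  fixes F :: "real \<Rightarrow> real \<Rightarrow> real"
  assumes P: "prob_space P" and Q: "prob_space Q" and A: "A \<in> sets P" and B: "B \<in> sets Q"
  shows "integrable (P \<Otimes>\<^sub>M Q) (\<lambda>(x, y). F (indicator A x) (indicator B y))" (is ?int)
    and "(\<integral>(x, y). F (indicator A x) (indicator B y) \<partial>(P \<Otimes>\<^sub>M Q)) =
      measure P A * (measure Q B * F 1 1 + (1 - measure Q B) * F 1 0) +
      (1 - measure P A) * (measure Q B * F 0 1 + (1 - measure Q B) * F 0 0)"
proof -
  interpret P: prob_space P by fact
  interpret Q: prob_space Q by fact
  interpret PQ: pair_prob_space P Q ..
  have [measurable]: "A \<in> sets P" "B \<in> sets Q" by fact+
  have F_ind: "F (indicator A x) (indicator B y) =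
      (if x \<in> A then if y \<in> B then F 1 1 else F 1 0 else if y \<in> B then F 0 1 else F 0 0)" for x y
    by (simp add: indicator_def)
  have "(\<lambda>(x, y). F (indicator A x) (indicator B y)) \<in> borel_measurable (P \<Otimes>\<^sub>M Q)"
    unfolding F_ind by measurable
  moreover have "norm (F (indicator A x) (indicator B y)) \<le>
      \<bar>F 0 0\<bar> + \<bar>F 0 1\<bar> + \<bar>F 1 0\<bar> + \<bar>F 1 1\<bar>" (is "_ \<le> ?bound") for x y
    unfolding F_ind by auto
  ultimately show int: ?int
    by (intro PQ.integrable_const_bound[where B = ?bound]) auto
  have "(\<integral>(x, y). F (indicator A x) (indicator B y) \<partial>(P \<Otimes>\<^sub>M Q)) =
      (\<integral>x. measure Q B * F (indicator A x) 1 + (1 - measure Q B) * F (indicator A x) 0 \<partial>P)"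
    using PQ.integral_fst[OF int] Q.integral_comp_indicator(2)[OF B] by simp
  also have "\<dots> = measure P A * (measure Q B * F 1 1 + (1 - measure Q B) * F 1 0) +
      (1 - measure P A) * (measure Q B * F 0 1 + (1 - measure Q B) * F 0 0)"
    using P.integral_comp_indicator(2)[OF A,
        of "\<lambda>i. measure Q B * F i 1 + (1 - measure Q B) * F i 0"] by simp
  finally show "(\<integral>(x, y). F (indicator A x) (indicator B y) \<partial>(P \<Otimes>\<^sub>M Q)) = \<dots>" .
qed

lemma integral_pair_swap_nonpos:
  fixes h :: "'a \<times> 'a \<Rightarrow> real"
  assumes "sigma_finite_measure M" and h: "integrable (M \<Otimes>\<^sub>M M) h"
    and swap: "\<And>x y. h (x, y) + h (y, x) \<le> 0"
  shows "integral\<^sup>L (M \<Otimes>\<^sub>M M) h \<le> 0"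
proof -
  interpret pair_sigma_finite M M
    using assms(1) by (intro pair_sigma_finite.intro)
  have h_swap: "integrable (M \<Otimes>\<^sub>M M) (\<lambda>(x, y). h (y, x))"
    using integrable_product_swap[OF h] .
  have "2 * integral\<^sup>L (M \<Otimes>\<^sub>M M) h = (\<integral>(x, y). h (x, y) + h (y, x) \<partial>(M \<Otimes>\<^sub>M M))"
    using h h_swap integral_product_swap[of h] by (simp add: split_beta')
  also have "\<dots> \<le> (\<integral>_. 0 \<partial>(M \<Otimes>\<^sub>M M))"
    using h h_swap swap by (intro integral_mono) (auto simp: split_beta')
  finally show ?thesis by simp
qed

lemma ex_measure_neq_if_prob_space_neq:
  assumes "prob_space P" "prob_space Q" "sets P = sets Q" "P \<noteq> Q"
  obtains A where "A \<in> sets P" "measure P A \<noteq> measure Q A"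
proof -
  have "\<exists>A\<in>sets P. emeasure P A \<noteq> emeasure Q A"
    using measure_eqI[OF assms(3)] assms(4) by blast
  then show ?thesis
    using assms(1,2,3) that
    by (metis finite_measure.emeasure_eq_measure prob_space.finite_measure sets_eq_imp_space_eq)
qed

locale relativistic_generator =
  fixes f :: "real \<Rightarrow> real" and a :: real
  assumes concave: "concave_on UNIV f"
    and zero: "f 0 = 0"
    and deriv: "(f has_real_derivative a) (at 0)"
    and deriv_nonzero: "a \<noteq> 0"
    and bounded: "bdd_above (range f)"
begin

lemma le_SUP_range: "f x \<le> (SUP t. f t)"
  using cSUP_upper[OF UNIV_I bounded] .

lemma integral_deviation_nonpos:
  assumes "prob_space M" and X: "integrable M X"
  shows "integrable M (\<lambda>x. f (X x - (\<integral>y. X y \<partial>M))) \<Longrightarrow>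
      (\<integral>x. f (X x - (\<integral>y. X y \<partial>M)) \<partial>M) \<le> 0"
    and "integrable M (\<lambda>x. f ((\<integral>y. X y \<partial>M) - X x)) \<Longrightarrow>
      (\<integral>x. f ((\<integral>y. X y \<partial>M) - X x) \<partial>M) \<le> 0"
proof -
  interpret prob_space M by fact
  show "(\<integral>x. f (X x - (\<integral>y. X y \<partial>M)) \<partial>M) \<le> 0"
    if "integrable M (\<lambda>x. f (X x - (\<integral>y. X y \<partial>M)))"
    using concave_jensens_inequality[OF _ that concave] X zero by (simp add: prob_space)
  show "(\<integral>x. f ((\<integral>y. X y \<partial>M) - X x) \<partial>M) \<le> 0"
    if "integrable M (\<lambda>x. f ((\<integral>y. X y \<partial>M) - X x))"
    using concave_jensens_inequality[OF _ that concave] X zero by (simp add: prob_space)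
qed

lemma scaled_sum_has_real_derivative:
  "((\<lambda>t. \<Sum>(w, k)\<leftarrow>ws. w * f (k * t))
    has_real_derivative a * (\<Sum>(w, k)\<leftarrow>ws. w * k)) (at 0)"
proof (induction ws)
  case Nil
  then show ?case by simp
next
  case (Cons wk ws)
  obtain w k where wk: "wk = (w, k)" by fastforce
  have "(f has_real_derivative a) (at (k * 0))"
    using deriv by simp
  then have "((\<lambda>t. f (k * t)) has_real_derivative a * k) (at 0)"
    by (rule DERIV_chain2) (auto intro!: derivative_eq_intros)
  with Cons.IH show ?case
    unfolding wk by (auto intro!: derivative_eq_intros simp: algebra_simps)
qed

lemma scaled_sum_pos:
  assumes "(\<Sum>(w, k)\<leftarrow>ws. w * k) \<noteq> 0"
  obtains t where "(\<Sum>(w, k)\<leftarrow>ws. w * f (k * t)) > 0"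
proof (rule DERIV_nonzero_imp_ex_pos[OF scaled_sum_has_real_derivative])
  show "a * (\<Sum>(w, k)\<leftarrow>ws. w * k) \<noteq> 0"
    using assms deriv_nonzero by simp
  show "(\<Sum>(w, k)\<leftarrow>ws. w * f (k * 0)) = 0"
    using zero by (induction ws) auto
qed (rule that)

lemma ex_event_scaled_sum_pos:
  assumes "prob_space P" "prob_space Q" "sets P = sets Q" "P \<noteq> Q"
    and "\<And>p q. (\<Sum>(w, k)\<leftarrow>ws p q. w * k) = c * (p - q)" and "c \<noteq> 0"
  obtains A t where "A \<in> sets P" "A \<in> sets Q"
    "(\<Sum>(w, k)\<leftarrow>ws (measure P A) (measure Q A). w * f (k * t)) > 0"
proof -
  obtain A where A: "A \<in> sets P" and pq: "measure P A \<noteq> measure Q A"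
    using ex_measure_neq_if_prob_space_neq[OF assms(1-4)] .
  have "(\<Sum>(w, k)\<leftarrow>ws (measure P A) (measure Q A). w * k) \<noteq> 0"
    using assms(5,6) pq by simp
  then obtain t where "(\<Sum>(w, k)\<leftarrow>ws (measure P A) (measure Q A). w * f (k * t)) > 0"
    by (rule scaled_sum_pos)
  with A assms(3) that show ?thesis by simp
qed

lemma DRp_nonneg_and_eq_0_iff:
  assumes P: "prob_space P" and Q: "prob_space Q" and PQ: "sets P = sets Q"
  shows "DRp f P Q \<ge> 0 \<and> (DRp f P Q = 0 \<longleftrightarrow> P = Q)"
  unfolding DRp_def
proof (rule SUP_nonneg_and_eq_0_iff[where B = "2 * (SUP t. f t)" and C\<^sub>0 = "\<lambda>_. 0"],
    goal_cases bounded critic_0 value_0 nonpos_if_eq pos_if_neq)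
  case (bounded C)
  have "(\<integral>(x, y). f (C x - C y) \<partial>(P \<Otimes>\<^sub>M Q)) \<le> (SUP t. f t)"
    using bounded le_SUP_range by (intro prob_space.integral_le_const[OF prob_space_pair[OF P Q]]) auto
  then show ?case by simp
next
  case critic_0
  show ?case by (simp add: zero split_beta')
next
  case value_0
  show ?case by (simp add: zero split_beta')
next
  case (nonpos_if_eq C)
  have "f (C x - C y) + f (C y - C x) \<le> 0" for x y
    using concave_on_add_minus_nonpos[OF concave zero, of "C x - C y"] by simp
  then have "(\<integral>(x, y). f (C x - C y) \<partial>(P \<Otimes>\<^sub>M P)) \<le> 0"
    using nonpos_if_eq by (intro integral_pair_swap_nonpos prob_space_imp_sigma_finite[OF P]) auto
  with nonpos_if_eq show ?case by simp
next
  case pos_if_neq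
  \<comment> \<open>the objective of the critic t * indicator A is the sum of w * f (k * t)
    over ws (P(A)) (Q(A))\<close>
  define ws :: "real \<Rightarrow> real \<Rightarrow> (real \<times> real) list"
    where "ws p q = [(2 * p * (1 - q), 1), (2 * (1 - p) * q, -1)]" for p q
  obtain A t where A: "A \<in> sets P" and AQ: "A \<in> sets Q"
    and t: "(\<Sum>(w, k)\<leftarrow>ws (measure P A) (measure Q A). w * f (k * t)) > 0"
    by (rule ex_event_scaled_sum_pos[OF P Q PQ pos_if_neq, of ws 2]) (auto simp: ws_def algebra_simps)
  define p q where "p = measure P A" and "q = measure Q A"
  define C where "C = (\<lambda>x. t * indicator A x)"
  note objective = integral_pair_comp_indicator[OF P Q A AQ, of "\<lambda>i j. f (t * i - t * j)",
      folded p_def q_def]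
  have "C \<in> borel_measurable P"
    using A unfolding C_def by measurable
  moreover have "integrable (P \<Otimes>\<^sub>M Q) (\<lambda>(x, y). f (C x - C y))"
    using objective by (simp add: C_def)
  moreover have "2 * (\<integral>(x, y). f (C x - C y) \<partial>(P \<Otimes>\<^sub>M Q)) > 0"
    using objective t[folded p_def q_def] zero by (simp add: C_def ws_def algebra_simps)
  ultimately show ?case by blast
qed

lemma DRa_nonneg_and_eq_0_iff:
  assumes P: "prob_space P" and Q: "prob_space Q" and PQ: "sets P = sets Q"
  shows "DRa f P Q \<ge> 0 \<and> (DRa f P Q = 0 \<longleftrightarrow> P = Q)"
  unfolding DRa_def
proof (rule SUP_nonneg_and_eq_0_iff[where B = "2 * (SUP t. f t)" and C\<^sub>0 = "\<lambda>_. 0"],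
    goal_cases bounded critic_0 value_0 nonpos_if_eq pos_if_neq)
  case (bounded C)
  have "(\<integral>x. f (C x - (\<integral>y. C y \<partial>Q)) \<partial>P) \<le> (SUP t. f t)"
    using bounded le_SUP_range by (intro prob_space.integral_le_const[OF P]) auto
  moreover have "(\<integral>y. f ((\<integral>x. C x \<partial>P) - C y) \<partial>Q) \<le> (SUP t. f t)"
    using bounded le_SUP_range by (intro prob_space.integral_le_const[OF Q]) auto
  ultimately show ?case by simp
next
  case critic_0
  show ?case by (simp add: zero)
next
  case value_0
  show ?case by (simp add: zero)
next
  case (nonpos_if_eq C)
  then show ?case
    using integral_deviation_nonpos[OF P, of C] by (simp add: add_nonpos_nonpos)
next
  case pos_if_neq
  define ws :: "real \<Rightarrow> real \<Rightarrow> (real \<times> real) list"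
    where "ws p q = [(p, 1 - q), (1 - p, - q), (q, p - 1), (1 - q, p)]" for p q
  obtain A t where A: "A \<in> sets P" and AQ: "A \<in> sets Q"
    and t: "(\<Sum>(w, k)\<leftarrow>ws (measure P A) (measure Q A). w * f (k * t)) > 0"
    by (rule ex_event_scaled_sum_pos[OF P Q PQ pos_if_neq, of ws 2]) (auto simp: ws_def algebra_simps)
  define p q where "p = measure P A" and "q = measure Q A"
  define C where "C = (\<lambda>x. t * indicator A x)"
  note E_P = prob_space.integral_comp_indicator[OF P A, folded p_def]
  note E_Q = prob_space.integral_comp_indicator[OF Q AQ, folded q_def]
  have means: "(\<integral>x. C x \<partial>P) = t * p" "(\<integral>y. C y \<partial>Q) = t * q"
    using E_P(2)[of "\<lambda>s. t * s"] E_Q(2)[of "\<lambda>s. t * s"] by (simp_all add: C_def)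
  have "C \<in> borel_measurable P"
    using A unfolding C_def by measurable
  moreover have "integrable P C" "integrable Q C"
    using E_P(1)[of "\<lambda>s. t * s"] E_Q(1)[of "\<lambda>s. t * s"] by (simp_all add: C_def)
  moreover have "integrable P (\<lambda>x. f (C x - (\<integral>y. C y \<partial>Q)))"
    "integrable Q (\<lambda>y. f ((\<integral>x. C x \<partial>P) - C y))"
    using E_P(1)[of "\<lambda>s. f (t * s - t * q)"] E_Q(1)[of "\<lambda>s. f (t * p - t * s)"]
    unfolding means by (simp_all add: C_def)
  moreover have
    "(\<integral>x. f (C x - (\<integral>y. C y \<partial>Q)) \<partial>P) + (\<integral>y. f ((\<integral>x. C x \<partial>P) - C y) \<partial>Q) > 0"
    using E_P(2)[of "\<lambda>s. f (t * s - t * q)"] E_Q(2)[of "\<lambda>s. f (t * p - t * s)"]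
      t[folded p_def q_def]
    unfolding means by (simp add: C_def ws_def algebra_simps)
  ultimately show ?case by blast
qed

lemma DRalf_nonneg_and_eq_0_iff:
  assumes P: "prob_space P" and Q: "prob_space Q" and PQ: "sets P = sets Q"
  shows "DRalf f P Q \<ge> 0 \<and> (DRalf f P Q = 0 \<longleftrightarrow> P = Q)"
  unfolding DRalf_def
proof (rule SUP_nonneg_and_eq_0_iff[where B = "2 * (SUP t. f t)" and C\<^sub>0 = "\<lambda>_. 0"],
    goal_cases bounded critic_0 value_0 nonpos_if_eq pos_if_neq)
  case (bounded C)
  have "(\<integral>x. f (C x - (\<integral>y. C y \<partial>Q)) \<partial>P) \<le> (SUP t. f t)"
    using bounded le_SUP_range by (intro prob_space.integral_le_const[OF P]) auto
  then show ?case by simp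
next
  case critic_0
  show ?case by (simp add: zero)
next
  case value_0
  show ?case by (simp add: zero)
next
  case (nonpos_if_eq C)
  then show ?case
    using integral_deviation_nonpos(1)[OF P, of C] by simp
next
  case pos_if_neq
  define ws :: "real \<Rightarrow> real \<Rightarrow> (real \<times> real) list"
    where "ws p q = [(2 * p, 1 - q), (2 * (1 - p), - q)]" for p q
  obtain A t where A: "A \<in> sets P" and AQ: "A \<in> sets Q"
    and t: "(\<Sum>(w, k)\<leftarrow>ws (measure P A) (measure Q A). w * f (k * t)) > 0"
    by (rule ex_event_scaled_sum_pos[OF P Q PQ pos_if_neq, of ws 2]) (auto simp: ws_def algebra_simps)
  define p q where "p = measure P A" and "q = measure Q A"
  define C where "C = (\<lambda>x. t * indicator A x)"
  note E_P = prob_space.integral_comp_indicator[OF P A, folded p_def]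
  note E_Q = prob_space.integral_comp_indicator[OF Q AQ, folded q_def]
  have mean: "(\<integral>y. C y \<partial>Q) = t * q"
    using E_Q(2)[of "\<lambda>s. t * s"] by (simp add: C_def)
  have "C \<in> borel_measurable P"
    using A unfolding C_def by measurable
  moreover have "integrable Q C"
    using E_Q(1)[of "\<lambda>s. t * s"] by (simp add: C_def)
  moreover have "integrable P (\<lambda>x. f (C x - (\<integral>y. C y \<partial>Q)))"
    using E_P(1)[of "\<lambda>s. f (t * s - t * q)"] unfolding mean by (simp add: C_def)
  moreover have "2 * (\<integral>x. f (C x - (\<integral>y. C y \<partial>Q)) \<partial>P) > 0"
    using E_P(2)[of "\<lambda>s. f (t * s - t * q)"] t[folded p_def q_def]
    unfolding mean by (simp add: C_def ws_def algebra_simps)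
  ultimately show ?case by blast
qed

lemma DRc_nonneg_and_eq_0_iff:
  assumes P: "prob_space P" and Q: "prob_space Q" and PQ: "sets P = sets Q"
  shows "DRc f P Q \<ge> 0 \<and> (DRc f P Q = 0 \<longleftrightarrow> P = Q)"
  unfolding DRc_def
proof (rule SUP_nonneg_and_eq_0_iff[where B = "2 * (SUP t. f t)" and C\<^sub>0 = "\<lambda>_. 0"],
    goal_cases bounded critic_0 value_0 nonpos_if_eq pos_if_neq)
  case (bounded C)
  have "(\<integral>x. f (C x - mix_mean P Q C) \<partial>P) \<le> (SUP t. f t)"
    using bounded le_SUP_range by (intro prob_space.integral_le_const[OF P]) auto
  moreover have "(\<integral>y. f (mix_mean P Q C - C y) \<partial>Q) \<le> (SUP t. f t)"
    using bounded le_SUP_range by (intro prob_space.integral_le_const[OF Q]) auto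
  ultimately show ?case by simp
next
  case critic_0
  show ?case by (simp add: zero mix_mean_def)
next
  case value_0
  show ?case by (simp add: zero mix_mean_def)
next
  case (nonpos_if_eq C)
  then show ?case
    using integral_deviation_nonpos[OF P, of C] by (simp add: mix_mean_def add_nonpos_nonpos)
next
  case pos_if_neq
  define ws :: "real \<Rightarrow> real \<Rightarrow> (real \<times> real) list"
    where "ws p q = (let r = (p + q) / 2 in
      [(p, 1 - r), (1 - p, - r), (q, r - 1), (1 - q, r)])" for p q
  obtain A t where A: "A \<in> sets P" and AQ: "A \<in> sets Q"
    and t: "(\<Sum>(w, k)\<leftarrow>ws (measure P A) (measure Q A). w * f (k * t)) > 0"
    by (rule ex_event_scaled_sum_pos[OF P Q PQ pos_if_neq, of ws 1]) (auto simp: ws_def Let_def field_simps)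
  define p q where "p = measure P A" and "q = measure Q A"
  define r where "r = (p + q) / 2"
  define C where "C = (\<lambda>x. t * indicator A x)"
  note E_P = prob_space.integral_comp_indicator[OF P A, folded p_def]
  note E_Q = prob_space.integral_comp_indicator[OF Q AQ, folded q_def]
  have "(\<integral>x. C x \<partial>P) = t * p" "(\<integral>y. C y \<partial>Q) = t * q"
    using E_P(2)[of "\<lambda>s. t * s"] E_Q(2)[of "\<lambda>s. t * s"] by (simp_all add: C_def)
  then have mean: "mix_mean P Q C = t * r"
    by (simp add: mix_mean_def r_def field_simps)
  have "C \<in> borel_measurable P"
    using A unfolding C_def by measurable
  moreover have "integrable P C" "integrable Q C"
    using E_P(1)[of "\<lambda>s. t * s"] E_Q(1)[of "\<lambda>s. t * s"] by (simp_all add: C_def)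
  moreover have "integrable P (\<lambda>x. f (C x - mix_mean P Q C))"
    "integrable Q (\<lambda>y. f (mix_mean P Q C - C y))"
    using E_P(1)[of "\<lambda>s. f (t * s - t * r)"] E_Q(1)[of "\<lambda>s. f (t * r - t * s)"]
    unfolding mean by (simp_all add: C_def)
  moreover have
    "(\<integral>x. f (C x - mix_mean P Q C) \<partial>P) + (\<integral>y. f (mix_mean P Q C - C y) \<partial>Q) > 0"
    using E_P(2)[of "\<lambda>s. f (t * s - t * r)"] E_Q(2)[of "\<lambda>s. f (t * r - t * s)"]
      t[folded p_def q_def, unfolded ws_def Let_def, folded r_def]
    unfolding mean by (simp add: C_def algebra_simps)
  ultimately show ?case by blast
qed

end

theorem theorem3p1:
  fixes f :: "real \<Rightarrow> real" and X :: "'a measure"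
  assumes "concave_on UNIV f"
    and "f 0 = 0"
    and "f differentiable (at 0)"
    and "deriv f 0 \<noteq> 0"
    and "bdd_above (range f)"
    and "(SUP x. f x) > 0"
    and "(\<exists>x>0. f x = (SUP t. f t)) \<or> (f \<longlongrightarrow> (SUP t. f t)) at_top"
  shows "is_divergence_on X (DRp f) \<and> is_divergence_on X (DRa f) \<and>
         is_divergence_on X (DRalf f) \<and> is_divergence_on X (DRc f)"
proof -
  interpret relativistic_generator f "deriv f 0"
  proof
    show "(f has_real_derivative deriv f 0) (at 0)"
      using assms(3) by (simp add: DERIV_deriv_iff_real_differentiable)
  qed (use assms(1,2,4,5) in auto)
  show ?thesis
    unfolding is_divergence_on_def
    by (intro conjI allI impI)
      (simp_all add: DRp_nonneg_and_eq_0_iff DRa_nonneg_and_eq_0_iff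
        DRalf_nonneg_and_eq_0_iff DRc_nonneg_and_eq_0_iff)
qed

end
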